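(* Let $X\subseteq\mathbb{R}^n$ be nonempty, closed and convex; let $F:X\to\mathbb{R}^n$ be $L_F$-Lipschitz continuous and monotone on $X$; let $H:X\to\mathbb{R}^n$ be $L_H$-Lipschitz continuous and monotone on $X$; and assume $\mathrm{SOL}(\mathrm{SOL}(X,F),H)\neq\emptyset$. Let $\gamma>0$, let $\{\eta_k\}$ be positive scalars, let $x_0\in X$, and for $k\ge0$ define $y_{k+1}=\Pi_X[x_k-\gamma(F(x_k)+\eta_kH(x_k))]$, $x_{k+1}=\Pi_X[x_k-\gamma(F(y_{k+1})+\eta_kH(y_{k+1}))]$. Then for any $x\in X$: (i) For all $k\ge0$, $\|x_{k+1}-x\|^2\le\|x_k-x\|^2-\|y_{k+1}-x_k\|^2+2\gamma^2(L_F^2+\eta_k^2L_H^2)\|y_{k+1}-x_k\|^2+2\gamma(F(y_{k+1})+\eta_kH(y_{k+1}))^\top(x-y_{k+1})$. (ii) If $\gamma^2(L_F^2+\eta_k^2L_H^2)\le0.5$ for all $k\ge0$, then for all $k\ge0$, $2\gamma(F(x)+\eta_kH(x))^\top(y_{k+1}-x)\le\|x_k-x\|^2-\|x_{k+1}-x\|^2$. (iii) If $\gamma^2(L_F^2+\eta_k^2L_H^2)\le0.5$ for all $k\ge0$ and moreover $H=\nabla f$ where $f$ is convex and $L$-smooth, then for all $k\ge0$, $2\gamma F(x)^\top(y_{k+1}-x)+2\gamma\eta_k(f(y_{k+1})-f(x))\le\|x_k-x\|^2-\|x_{k+1}-x\|^2$.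
   Context: $\mathrm{SOL}(Y,G)=\{x\in Y: G(x)^\top(y-x)\ge0\ \forall y\in Y\}$; $\Pi_X$ is the Euclidean projection onto $X$. $L$-smooth means continuously differentiable with $L$-Lipschitz gradient (in (iii), $L_H=L$). *)

theory Defs
  imports "HOL-Analysis.Analysis"
begin

definition SOL :: "'a::real_inner set \<Rightarrow> ('a \<Rightarrow> 'a) \<Rightarrow> 'a set" where
  "SOL Y G = {x \<in> Y. \<forall>y\<in>Y. G x \<bullet> (y - x) \<ge> 0}"

definition monotone_op :: "'a::real_inner set \<Rightarrow> ('a \<Rightarrow> 'a) \<Rightarrow> bool" where
  "monotone_op X G \<longleftrightarrow> (\<forall>x\<in>X. \<forall>y\<in>X. (G x - G y) \<bullet> (x - y) \<ge> 0)"

end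

theory Submission
  imports Defs
begin

text \<open>
  Write \<open>G = F + \<eta>\<^sub>k H\<close>, so that \<open>y' = \<Pi>(x\<^sub>k - \<gamma> G x\<^sub>k)\<close> and \<open>x' = \<Pi>(x\<^sub>k - \<gamma> G y')\<close>.
  The obtuse-angle inequality of the projection, applied to both projections and added up,
  gives an exact three-point estimate whose only bad term is \<open>2\<gamma> (G x\<^sub>k - G y') \<bullet> (x' - y')\<close>;
  Young's inequality and the Lipschitz bound
  \<open>\<parallel>G a - G b\<parallel>\<^sup>2 \<le> 2 (L\<^sub>F\<^sup>2 + \<eta>\<^sub>k\<^sup>2 L\<^sub>H\<^sup>2) \<parallel>a - b\<parallel>\<^sup>2\<close> turn it into (i).
  Under the step-size condition the \<open>\<parallel>y' - x\<^sub>k\<parallel>\<^sup>2\<close> terms cancel, and (ii) and (iii) follow by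
  bounding \<open>G y' \<bullet> (y' - x)\<close> from below by a quantity at \<open>x\<close>: by monotonicity of \<open>G\<close>, resp.
  by monotonicity of \<open>F\<close> together with the gradient inequality of the convex \<open>f\<close>.
  These are one-step estimates.
\<close>

lemma inner_le_sum_squares:
  fixes u v :: "'a::real_inner"
  shows "2 * (u \<bullet> v) \<le> (norm u)\<^sup>2 + (norm v)\<^sup>2"
proof -
  have "0 \<le> (norm (u - v))\<^sup>2" by simp
  then show ?thesis
    by (simp add: power2_norm_eq_inner inner_diff_left inner_diff_right inner_commute)
qed

lemma lipschitz_on_norm_diff_square:
  assumes "L-lipschitz_on X G" "a \<in> X" "b \<in> X"
  shows "(norm (G a - G b))\<^sup>2 \<le> L\<^sup>2 * (dist a b)\<^sup>2"
proof -
  have "norm (G a - G b) \<le> L * dist a b"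
    using lipschitz_onD[OF assms] by (simp add: dist_norm)
  then have "(norm (G a - G b))\<^sup>2 \<le> (L * dist a b)\<^sup>2"
    by (intro power_mono) auto
  then show ?thesis by (simp add: power_mult_distrib)
qed

lemma norm_diff_add_scaleR_square_le:
  fixes F H :: "'a::metric_space \<Rightarrow> 'b::real_normed_vector"
  assumes F: "LF-lipschitz_on X F" and H: "LH-lipschitz_on X H"
    and c: "c \<ge> 0" and ab: "a \<in> X" "b \<in> X"
  shows "(norm ((F a + c *\<^sub>R H a) - (F b + c *\<^sub>R H b)))\<^sup>2
           \<le> 2 * (LF\<^sup>2 + c\<^sup>2 * LH\<^sup>2) * (dist a b)\<^sup>2"
proof -
  have "(LF + c * LH)-lipschitz_on X (\<lambda>w. F w + c *\<^sub>R H w)"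
    by (intro lipschitz_on_add lipschitz_on_cmult_nonneg F H c)
  from lipschitz_on_norm_diff_square[OF this ab]
  have "(norm ((F a + c *\<^sub>R H a) - (F b + c *\<^sub>R H b)))\<^sup>2 \<le> (LF + c * LH)\<^sup>2 * (dist a b)\<^sup>2" .
  also have "\<dots> \<le> 2 * (LF\<^sup>2 + c\<^sup>2 * LH\<^sup>2) * (dist a b)\<^sup>2"
    using sum_squares_bound[of LF "c * LH"]
    by (intro mult_right_mono) (auto simp: power2_sum power_mult_distrib mult.commute)
  finally show ?thesis .
qed

lemma extragradient_step:
  fixes X :: "'a::{real_inner,heine_borel} set"
  assumes X: "closed X" "convex X" and z: "z \<in> X"
    and b: "b = closest_point X (a - \<gamma> *\<^sub>R G a)"
    and c: "c = closest_point X (a - \<gamma> *\<^sub>R G b)"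
    and lip: "(norm (G a - G b))\<^sup>2 \<le> M * (norm (b - a))\<^sup>2"
  shows "(norm (c - z))\<^sup>2 \<le> (norm (a - z))\<^sup>2 - (norm (b - a))\<^sup>2
           + \<gamma>\<^sup>2 * M * (norm (b - a))\<^sup>2 + 2 * \<gamma> * (G b \<bullet> (z - b))"
proof -
  have "c \<in> X"
    using X z by (auto simp: c intro!: closest_point_in_set)
  have obtuse_c: "(a - \<gamma> *\<^sub>R G b - c) \<bullet> (z - c) \<le> 0"
    using closest_point_dot[OF X(2,1) z] by (simp add: c)
  have obtuse_b: "(a - \<gamma> *\<^sub>R G a - b) \<bullet> (c - b) \<le> 0"
    using closest_point_dot[OF X(2,1) \<open>c \<in> X\<close>] by (simp add: b)
  have three_point: "(norm (c - z))\<^sup>2 = (norm (a - z))\<^sup>2 - (norm (b - a))\<^sup>2 - (norm (c - b))\<^sup>2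
      + 2 * \<gamma> * ((G a - G b) \<bullet> (c - b)) + 2 * \<gamma> * (G b \<bullet> (z - b))
      + 2 * ((a - \<gamma> *\<^sub>R G b - c) \<bullet> (z - c)) + 2 * ((a - \<gamma> *\<^sub>R G a - b) \<bullet> (c - b))"
    by (simp add: power2_norm_eq_inner inner_diff_left inner_diff_right inner_commute algebra_simps)
  have young: "2 * \<gamma> * ((G a - G b) \<bullet> (c - b)) \<le> \<gamma>\<^sup>2 * (norm (G a - G b))\<^sup>2 + (norm (c - b))\<^sup>2"
    using inner_le_sum_squares[of "\<gamma> *\<^sub>R (G a - G b)" "c - b"] by (simp add: power_mult_distrib)
  have "\<gamma>\<^sup>2 * (norm (G a - G b))\<^sup>2 \<le> \<gamma>\<^sup>2 * M * (norm (b - a))\<^sup>2"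
    using mult_left_mono[OF lip, of "\<gamma>\<^sup>2"] by (simp add: mult.assoc)
  with three_point young obtuse_b obtuse_c show ?thesis by linarith
qed

lemma extragradient_step_descent:
  fixes X :: "'a::{real_inner,heine_borel} set"
  assumes X: "closed X" "convex X" and z: "z \<in> X"
    and b: "b = closest_point X (a - \<gamma> *\<^sub>R G a)"
    and c: "c = closest_point X (a - \<gamma> *\<^sub>R G b)"
    and lip: "(norm (G a - G b))\<^sup>2 \<le> M * (norm (b - a))\<^sup>2"
    and small: "\<gamma>\<^sup>2 * M \<le> 1"
  shows "2 * \<gamma> * (G b \<bullet> (b - z)) \<le> (norm (a - z))\<^sup>2 - (norm (c - z))\<^sup>2"
proof -
  have "\<gamma>\<^sup>2 * M * (norm (b - a))\<^sup>2 \<le> 1 * (norm (b - a))\<^sup>2"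
    using small by (intro mult_right_mono) auto
  moreover have "2 * \<gamma> * (G b \<bullet> (z - b)) = - (2 * \<gamma> * (G b \<bullet> (b - z)))"
    by (simp add: inner_diff_right algebra_simps)
  ultimately show ?thesis
    using extragradient_step[OF X z b c lip] by linarith
qed

lemma convex_on_along_line:
  assumes "convex_on UNIV f"
  shows "convex_on UNIV (\<lambda>t::real. f (y + t *\<^sub>R d))"
proof (rule convex_onI)
  fix t s r :: real
  assume t: "0 < t" "t < 1"
  have "y + ((1 - t) * s + t * r) *\<^sub>R d = (1 - t) *\<^sub>R (y + s *\<^sub>R d) + t *\<^sub>R (y + r *\<^sub>R d)"
    by (simp add: algebra_simps)
  with convex_onD[OF assms, of t "y + s *\<^sub>R d" "y + r *\<^sub>R d"] t
  show "f (y + ((1 - t) *\<^sub>R s + t *\<^sub>R r) *\<^sub>R d) \<le> (1 - t) * f (y + s *\<^sub>R d) + t * f (y + r *\<^sub>R d)"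
    by simp
qed simp

lemma convex_on_imp_above_derivative:
  fixes f :: "'a::real_normed_vector \<Rightarrow> real"
  assumes convex: "convex_on UNIV f" and deriv: "(f has_derivative f') (at y)"
  shows "f' (z - y) \<le> f z - f y"
proof -
  define d where "d = z - y"
  have "linear f'"
    using has_derivative_bounded_linear[OF deriv] bounded_linear.linear by blast
  have line: "((\<lambda>t::real. y + t *\<^sub>R d) has_derivative (\<lambda>t. t *\<^sub>R d)) (at 0)"
    by (auto intro!: derivative_eq_intros)
  have "((\<lambda>t. f (y + t *\<^sub>R d)) has_derivative (\<lambda>t. f' (t *\<^sub>R d))) (at 0)"
    using has_derivative_compose[OF line] deriv by (simp add: o_def)
  moreover have "(\<lambda>t. f' (t *\<^sub>R d)) = (*) (f' d)"
    using linear_scale[OF \<open>linear f'\<close>] by (auto simp: fun_eq_iff)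
  ultimately have "((\<lambda>t. f (y + t *\<^sub>R d)) has_field_derivative f' d) (at 0 within UNIV)"
    by (simp add: has_field_derivative_def)
  from convex_on_imp_above_tangent[OF convex_on_along_line[OF convex] _ _ _ this, of 1]
  show ?thesis by (simp add: d_def)
qed

lemma monotone_op_add_scaleR:
  assumes F: "monotone_op X F" and H: "monotone_op X H" and c: "c \<ge> 0"
  shows "monotone_op X (\<lambda>w. F w + c *\<^sub>R H w)"
  unfolding monotone_op_def
proof (intro ballI)
  fix a b assume "a \<in> X" "b \<in> X"
  then have "0 \<le> (F a - F b) \<bullet> (a - b)" "0 \<le> (H a - H b) \<bullet> (a - b)"
    using F H by (auto simp: monotone_op_def)
  moreover have "(F a + c *\<^sub>R H a - (F b + c *\<^sub>R H b)) \<bullet> (a - b)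
      = (F a - F b) \<bullet> (a - b) + c * ((H a - H b) \<bullet> (a - b))"
    by (simp add: algebra_simps inner_diff_left)
  ultimately show "0 \<le> (F a + c *\<^sub>R H a - (F b + c *\<^sub>R H b)) \<bullet> (a - b)"
    using c by simp
qed

lemma monotone_op_inner_le:
  assumes "monotone_op X G" "a \<in> X" "z \<in> X"
  shows "G z \<bullet> (a - z) \<le> G a \<bullet> (a - z)"
proof -
  have "0 \<le> (G a - G z) \<bullet> (a - z)"
    using assms by (auto simp: monotone_op_def)
  then show ?thesis by (simp add: inner_diff_left)
qed

lemma monotone_op_add_gradient_inner_ge:
  fixes f :: "'a::real_inner \<Rightarrow> real"
  assumes F: "monotone_op X F" and az: "a \<in> X" "z \<in> X"
    and f: "convex_on UNIV f" "(f has_derivative (\<lambda>h. g \<bullet> h)) (at a)" and c: "c \<ge> 0"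
  shows "F z \<bullet> (a - z) + c * (f a - f z) \<le> (F a + c *\<^sub>R g) \<bullet> (a - z)"
proof -
  have "g \<bullet> (z - a) \<le> f z - f a"
    using convex_on_imp_above_derivative[OF f] .
  then have "c * (f a - f z) \<le> c * (g \<bullet> (a - z))"
    using c by (intro mult_left_mono) (auto simp: inner_diff_right)
  with monotone_op_inner_le[OF F az] show ?thesis
    by (simp add: inner_add_left)
qed

theorem lemma3p3:
  fixes X :: "'a::euclidean_space set"
    and F H :: "'a \<Rightarrow> 'a" and f :: "'a \<Rightarrow> real"
    and LF LH \<gamma> :: real and \<eta> :: "nat \<Rightarrow> real"
    and x y :: "nat \<Rightarrow> 'a"
  assumes X: "X \<noteq> {}" "closed X" "convex X"
    and F: "lipschitz_on LF X F" "monotone_op X F"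
    and H: "lipschitz_on LH X H" "monotone_op X H"
    and sol: "SOL (SOL X F) H \<noteq> {}"
    and gam: "\<gamma> > 0"
    and eta: "\<And>k. \<eta> k > 0"
    and x0: "x 0 \<in> X"
    and ystep: "\<And>k. y (Suc k) = closest_point X (x k - \<gamma> *\<^sub>R (F (x k) + \<eta> k *\<^sub>R H (x k)))"
    and xstep: "\<And>k. x (Suc k) = closest_point X (x k - \<gamma> *\<^sub>R (F (y (Suc k)) + \<eta> k *\<^sub>R H (y (Suc k))))"
  shows "\<forall>z\<in>X.
     (\<forall>k. (norm (x (Suc k) - z))\<^sup>2 \<le> (norm (x k - z))\<^sup>2 - (norm (y (Suc k) - x k))\<^sup>2
            + 2 * \<gamma>\<^sup>2 * (LF\<^sup>2 + (\<eta> k)\<^sup>2 * LH\<^sup>2) * (norm (y (Suc k) - x k))\<^sup>2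
            + 2 * \<gamma> * ((F (y (Suc k)) + \<eta> k *\<^sub>R H (y (Suc k))) \<bullet> (z - y (Suc k))))
   \<and> ((\<forall>k. \<gamma>\<^sup>2 * (LF\<^sup>2 + (\<eta> k)\<^sup>2 * LH\<^sup>2) \<le> 1/2) \<longrightarrow>
        (\<forall>k. 2 * \<gamma> * ((F z + \<eta> k *\<^sub>R H z) \<bullet> (y (Suc k) - z))
               \<le> (norm (x k - z))\<^sup>2 - (norm (x (Suc k) - z))\<^sup>2))
   \<and> ((\<forall>k. \<gamma>\<^sup>2 * (LF\<^sup>2 + (\<eta> k)\<^sup>2 * LH\<^sup>2) \<le> 1/2)
        \<and> convex_on UNIV f
        \<and> (\<forall>w. (f has_derivative (\<lambda>h. H w \<bullet> h)) (at w))
        \<and> continuous_on UNIV H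
        \<and> lipschitz_on LH UNIV H \<longrightarrow>
        (\<forall>k. 2 * \<gamma> * (F z \<bullet> (y (Suc k) - z)) + 2 * \<gamma> * \<eta> k * (f (y (Suc k)) - f z)
               \<le> (norm (x k - z))\<^sup>2 - (norm (x (Suc k) - z))\<^sup>2))"
proof -
  have yX: "y (Suc k) \<in> X" for k
    using X by (simp add: ystep closest_point_in_set)
  have xX: "x k \<in> X" for k
    by (cases k) (use x0 X in \<open>auto simp: xstep closest_point_in_set\<close>)
  have lip: "(norm ((F (x k) + \<eta> k *\<^sub>R H (x k)) - (F (y (Suc k)) + \<eta> k *\<^sub>R H (y (Suc k)))))\<^sup>2
      \<le> 2 * (LF\<^sup>2 + (\<eta> k)\<^sup>2 * LH\<^sup>2) * (norm (y (Suc k) - x k))\<^sup>2" for k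
    using norm_diff_add_scaleR_square_le[OF F(1) H(1) less_imp_le[OF eta] xX yX]
    by (simp add: dist_norm norm_minus_commute)
  have descent: "2 * \<gamma> * ((F (y (Suc k)) + \<eta> k *\<^sub>R H (y (Suc k))) \<bullet> (y (Suc k) - z))
      \<le> (norm (x k - z))\<^sup>2 - (norm (x (Suc k) - z))\<^sup>2"
    if "z \<in> X" "\<gamma>\<^sup>2 * (LF\<^sup>2 + (\<eta> k)\<^sup>2 * LH\<^sup>2) \<le> 1/2" for z k
    using that by (intro extragradient_step_descent[OF X(2,3) _ ystep xstep lip]) (simp_all add: algebra_simps)
  show ?thesis
  proof (intro ballI conjI impI allI)
    fix z k assume z: "z \<in> X"
    show "(norm (x (Suc k) - z))\<^sup>2 \<le> (norm (x k - z))\<^sup>2 - (norm (y (Suc k) - x k))\<^sup>2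
            + 2 * \<gamma>\<^sup>2 * (LF\<^sup>2 + (\<eta> k)\<^sup>2 * LH\<^sup>2) * (norm (y (Suc k) - x k))\<^sup>2
            + 2 * \<gamma> * ((F (y (Suc k)) + \<eta> k *\<^sub>R H (y (Suc k))) \<bullet> (z - y (Suc k)))"
      using extragradient_step[OF X(2,3) z ystep[of k] xstep[of k] lip[of k]] by (simp add: algebra_simps)
  next
    fix z k assume z: "z \<in> X" and small: "\<forall>k. \<gamma>\<^sup>2 * (LF\<^sup>2 + (\<eta> k)\<^sup>2 * LH\<^sup>2) \<le> 1/2"
    have "(F z + \<eta> k *\<^sub>R H z) \<bullet> (y (Suc k) - z)
        \<le> (F (y (Suc k)) + \<eta> k *\<^sub>R H (y (Suc k))) \<bullet> (y (Suc k) - z)"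
      using monotone_op_add_scaleR[OF F(2) H(2) less_imp_le[OF eta]] yX z
      by (rule monotone_op_inner_le)
    then show "2 * \<gamma> * ((F z + \<eta> k *\<^sub>R H z) \<bullet> (y (Suc k) - z))
        \<le> (norm (x k - z))\<^sup>2 - (norm (x (Suc k) - z))\<^sup>2"
      using order_trans[OF mult_left_mono descent[OF z]] small gam by simp
  next
    fix z k assume z: "z \<in> X" and hyps: "(\<forall>k. \<gamma>\<^sup>2 * (LF\<^sup>2 + (\<eta> k)\<^sup>2 * LH\<^sup>2) \<le> 1/2)
        \<and> convex_on UNIV f \<and> (\<forall>w. (f has_derivative (\<lambda>h. H w \<bullet> h)) (at w))
        \<and> continuous_on UNIV H \<and> lipschitz_on LH UNIV H"
    have "F z \<bullet> (y (Suc k) - z) + \<eta> k * (f (y (Suc k)) - f z)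
        \<le> (F (y (Suc k)) + \<eta> k *\<^sub>R H (y (Suc k))) \<bullet> (y (Suc k) - z)"
      using hyps by (intro monotone_op_add_gradient_inner_ge[OF F(2) yX z] less_imp_le[OF eta]) auto
    then have "2 * \<gamma> * (F z \<bullet> (y (Suc k) - z) + \<eta> k * (f (y (Suc k)) - f z))
        \<le> (norm (x k - z))\<^sup>2 - (norm (x (Suc k) - z))\<^sup>2"
      using order_trans[OF mult_left_mono descent[OF z]] hyps gam by simp
    then show "2 * \<gamma> * (F z \<bullet> (y (Suc k) - z)) + 2 * \<gamma> * \<eta> k * (f (y (Suc k)) - f z)
        \<le> (norm (x k - z))\<^sup>2 - (norm (x (Suc k) - z))\<^sup>2"
      by (simp add: distrib_left mult.assoc)
  qed
qed

end
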